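(* Let $k\ge 2$ and let $p,q$ be real polynomials with $\deg p=k$, $\deg q=k-1$, whose roots are real, simple and strictly interlacing; let $R=q/p$, viewed as a holomorphic map $\mathbb{C}P^1\to\mathbb{C}P^1$. For $\alpha\in\mathbb{R}$ let $p_1(\alpha)<\dots<p_k(\alpha)$ be the (real, simple) roots of $p+\alpha q$, and for $j=1,\dots,k-1$ let $D_j(\alpha)$ be the open disk having $[p_j(\alpha),p_{j+1}(\alpha)]$ as a diameter. Then for every $\alpha\in\mathbb{R}$ and every $j\in\{1,\dots,k-1\}$, $D_j(\alpha)$ is a maximal real univalent disk of $R$: $R$ is injective on $D_j(\alpha)$, and there is no real open disk in $\mathbb{C}P^1$ strictly containing $D_j(\alpha)$ on which $R$ is injective.
   Context: A disk in $\mathbb{C}P^1$ (an open disk, an open half-plane, or the complement of a closed disk together with $\infty$) is called real if it is invariant under complex conjugation. "Strictly interlacing" means $p_1<q_1<p_2<\dots<q_{k-1}<p_k$ for the roots $p_i$ of $p$ and $q_i$ of $q$. *)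

theory Defs
  imports "HOL-Analysis.Analysis" "HOL-Computational_Algebra.Polynomial"
begin

text \<open>CP^1 is modelled as complex option: Some z is the finite point z, None is infinity.\<close>

definition cpx :: "real poly \<Rightarrow> complex poly" where
  "cpx = map_poly complex_of_real"

text \<open>The rational map R = q/p on CP^1 (for coprime p, q).\<close>
definition ratmap :: "real poly \<Rightarrow> real poly \<Rightarrow> complex option \<Rightarrow> complex option" where
  "ratmap q p w = (case w of
      Some z \<Rightarrow> (if poly (cpx p) z = 0 then None else Some (poly (cpx q) z / poly (cpx p) z))
    | None \<Rightarrow> (if degree q < degree p then Some 0
              else if degree q = degree p then Some (complex_of_real (lead_coeff q / lead_coeff p))
              else None))"

definition disk_cp1 :: "complex option set \<Rightarrow> bool" where
  "disk_cp1 D \<longleftrightarrow>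
     (\<exists>c r. r > 0 \<and> D = Some ` ball c r) \<or>
     (\<exists>w a. w \<noteq> 0 \<and> D = Some ` {z. Re (z * cnj w) > a}) \<or>
     (\<exists>c r. r > 0 \<and> D = insert None (Some ` (- cball c r)))"

definition real_disk :: "complex option set \<Rightarrow> bool" where
  "real_disk D \<longleftrightarrow> disk_cp1 D \<and> map_option cnj ` D = D"

definition max_real_univalent :: "(complex option \<Rightarrow> complex option) \<Rightarrow> complex option set \<Rightarrow> bool" where
  "max_real_univalent f D \<longleftrightarrow> real_disk D \<and> inj_on f D \<and>
     \<not> (\<exists>D'. real_disk D' \<and> D \<subset> D' \<and> inj_on f D')"

end

theory Submission
  imports Defs
begin

(*
  1. Lagrange interpolation at the simple roots s of p gives the Wronskian identity
     W = q p' - p q' = \<Sum>s. c_s (p/(x-s))^2 with residues c_s = q(s)/p'(s).  Interlacing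
     forces all c_s to have one sign \<sigma>, hence \<sigma> W > 0 on the real line.
  2. W = q p_\<alpha>' - p_\<alpha> q', so at each root r of p_\<alpha> we get \<sigma> q(r) p_\<alpha>'(r) > 0: the roots of
     p_\<alpha> are simple, there are k of them (intermediate value theorem between the roots
     of p), and q/p_\<alpha> = \<Sum>s. d_s/(z-s) with \<sigma> d_s > 0.
  3. Injectivity: R(z) = R(w) iff (q/p_\<alpha>)(z) = (q/p_\<alpha>)(w).  For z, w in the disk, the vectors
     z - s (s \<le> a) and s - z (s \<ge> b) fit in a common quarter-plane sector, so the difference
     of the two partial-fraction sums is (w - z) times a nonzero number.
  4. Maximality: a strictly larger real disk contains a or b, hence a real point x outside
     [a, b]; since q(a) q(b) < 0, the intermediate value theorem yields y in (a, b) with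
     R(y) = R(x).
*)

text \<open>Keep products with linear factors \<open>[:-a, 1:] * H\<close> unexpanded.\<close>
declare mult_pCons_left [simp del] mult_pCons_right [simp del]


lemma cpx_pCons: "cpx (pCons c P) = pCons (complex_of_real c) (cpx P)"
  by (simp add: cpx_def map_poly_pCons)

lemma cpx_0 [simp]: "cpx 0 = 0"
  by (simp add: cpx_def)

lemma cpx_add: "cpx (P + Q) = cpx P + cpx Q"
  by (intro poly_eqI) (simp add: cpx_def coeff_map_poly)

lemma cpx_smult: "cpx (smult c P) = smult (complex_of_real c) (cpx P)"
  by (intro poly_eqI) (simp add: cpx_def coeff_map_poly)

lemma cpx_mult: "cpx (P * Q) = cpx P * cpx Q"
  by (induction P) (simp_all add: cpx_pCons cpx_add cpx_smult mult_pCons_left)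

lemma cpx_sum: "cpx (sum f A) = (\<Sum>x\<in>A. cpx (f x))"
  by (induction A rule: infinite_finite_induct) (simp_all add: cpx_add)

lemma poly_cpx_of_real: "poly (cpx P) (complex_of_real x) = complex_of_real (poly P x)"
  by (induction P) (simp_all add: cpx_pCons)

lemma poly_cpx_linear: "poly (cpx [:-s, 1:]) z = z - complex_of_real s"
  by (simp add: cpx_pCons)


lemma pderiv_at_linear_factor:
  fixes H :: "'a::idom poly"
  assumes "P = [:-a, 1:] * H"
  shows "poly (pderiv P) a = poly H a"
proof -
  have "pderiv P = [:-a, 1:] * pderiv H + H * pderiv [:-a, 1:]"
    by (simp only: assms pderiv_mult)
  then show ?thesis by (simp add: pderiv_pCons)
qed

lemma simple_root_pderiv_nonzero:
  fixes P :: "'a::field_char_0 poly"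
  assumes P: "P \<noteq> 0" and ord: "order a P = 1"
  shows "poly (pderiv P) a \<noteq> 0"
proof -
  have root: "poly P a = 0" using ord order_root by fastforce
  have "pderiv P \<noteq> 0"
  proof
    assume "pderiv P = 0"
    then obtain h where "P = [:h:]" using pderiv_iszero by blast
    then show False using root P by simp
  qed
  moreover have "order a (pderiv P) = 0" using order_pderiv[OF P root] ord by simp
  ultimately show ?thesis by (simp add: order_root)
qed

lemma no_root_same_sign:
  fixes G :: "real poly"
  assumes "x \<le> y" and no_root: "\<And>t. x \<le> t \<Longrightarrow> t \<le> y \<Longrightarrow> poly G t \<noteq> 0"
  shows "poly G x * poly G y > 0"
proof (rule ccontr)
  have nx: "poly G x \<noteq> 0" and ny: "poly G y \<noteq> 0" using assms by auto
  assume "\<not> ?thesis"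
  then have lt: "poly G x * poly G y < 0" using nx ny
    by (metis linorder_neqE_linordered_idom mult_eq_0_iff)
  then have "x < y" using assms(1) by (cases "x = y") (auto simp: mult_less_0_iff)
  from poly_IVT[OF this lt] obtain t where "x < t" "t < y" "poly G t = 0" by blast
  then show False using no_root[of t] by auto
qed

definition consecutive_roots :: "real poly \<Rightarrow> real \<Rightarrow> real \<Rightarrow> bool" where
  "consecutive_roots P a b \<longleftrightarrow> a < b \<and> poly P a = 0 \<and> poly P b = 0 \<and>
     (\<forall>s. poly P s = 0 \<longrightarrow> s \<le> a \<or> b \<le> s)"

lemma consecutive_roots_pderiv_alternates:
  fixes P :: "real poly"
  assumes cr: "consecutive_roots P a b"
    and da: "poly (pderiv P) a \<noteq> 0" and db: "poly (pderiv P) b \<noteq> 0"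
  shows "poly (pderiv P) a * poly (pderiv P) b < 0"
proof -
  have ab: "a < b" and ra: "poly P a = 0" and rb: "poly P b = 0"
    and outside: "\<And>x. a < x \<Longrightarrow> x < b \<Longrightarrow> poly P x \<noteq> 0"
    using cr by (auto simp: consecutive_roots_def)
  obtain H where H: "P = [:-a, 1:] * H" using ra poly_eq_0_iff_dvd by blast
  have "poly H b = 0" using rb ab H by simp
  then obtain G where G: "H = [:-b, 1:] * G" using poly_eq_0_iff_dvd by blast
  have P1: "P = [:-a, 1:] * ([:-b, 1:] * G)" using H G by simp
  have P2: "P = [:-b, 1:] * ([:-a, 1:] * G)" using H G by (simp add: ac_simps)
  have e1: "poly (pderiv P) a = (a - b) * poly G a" using pderiv_at_linear_factor[OF P1] by simp
  have e2: "poly (pderiv P) b = (b - a) * poly G b" using pderiv_at_linear_factor[OF P2] by simp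
  have "poly G a * poly G b > 0"
  proof (rule no_root_same_sign)
    fix t assume t: "a \<le> t" "t \<le> b"
    show "poly G t \<noteq> 0"
    proof (cases "t = a \<or> t = b")
      case True then show ?thesis using e1 e2 da db by auto
    next
      case False
      then have "poly P t \<noteq> 0" using outside t by auto
      then show ?thesis using P1 by auto
    qed
  qed (use ab in auto)
  moreover have "poly (pderiv P) a * poly (pderiv P) b = ((a - b) * (b - a)) * (poly G a * poly G b)"
    by (simp add: e1 e2 algebra_simps)
  ultimately show ?thesis using ab by (simp add: mult_neg_pos)
qed

lemma simple_root_sign_change:
  fixes Q :: "real poly"
  assumes xc: "x < c" and cy: "c < y" and rc: "poly Q c = 0" and dc: "poly (pderiv Q) c \<noteq> 0"
    and only: "\<And>t. x \<le> t \<Longrightarrow> t \<le> y \<Longrightarrow> poly Q t = 0 \<Longrightarrow> t = c"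
  shows "poly Q x * poly Q y < 0"
proof -
  obtain G where G: "Q = [:-c, 1:] * G" using rc poly_eq_0_iff_dvd by blast
  have Gc: "poly G c \<noteq> 0" using pderiv_at_linear_factor[OF G] dc by simp
  have "poly G x * poly G y > 0"
  proof (rule no_root_same_sign)
    fix t assume t: "x \<le> t" "t \<le> y"
    show "poly G t \<noteq> 0"
    proof
      assume Gt: "poly G t = 0"
      then have "t = c" using only t G by simp
      then show False using Gc Gt by simp
    qed
  qed (use xc cy in auto)
  moreover have "poly Q x * poly Q y = ((x - c) * (y - c)) * (poly G x * poly G y)"
    using G by (simp add: algebra_simps)
  ultimately show ?thesis using xc cy by (simp add: mult_neg_pos)
qed

lemma prod_linear_factors_dvd:
  fixes P :: "real poly"
  assumes "finite S" "\<forall>s\<in>S. poly P s = 0"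
  shows "(\<Prod>s\<in>S. [:-s, 1:]) dvd P"
  using assms
proof (induction S arbitrary: P rule: finite_induct)
  case empty then show ?case by simp
next
  case (insert s S)
  then obtain P1 where P1: "P = (\<Prod>t\<in>S. [:-t, 1:]) * P1" by (meson dvdE insert_iff)
  have "poly (\<Prod>t\<in>S. [:-t, 1:]) s \<noteq> 0"
    using insert(1,2) by (auto simp: poly_prod)
  moreover have "poly P s = 0" using insert by auto
  ultimately have "poly P1 s = 0" using P1 by simp
  then obtain P2 where "P1 = [:-s, 1:] * P2" using poly_eq_0_iff_dvd by blast
  then have "P = (\<Prod>t\<in>insert s S. [:-t, 1:]) * P2"
    using P1 insert(1,2) by (simp add: ac_simps)
  then show ?case by simp
qed

definition simple_root_set :: "real poly \<Rightarrow> real set \<Rightarrow> bool" where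
  "simple_root_set P S \<longleftrightarrow> finite S \<and> card S = degree P \<and>
     (\<forall>s\<in>S. poly P s = 0 \<and> poly (pderiv P) s \<noteq> 0)"

text \<open>If all real roots of \<open>P\<close> are simple and at most one is missing for \<open>P\<close> to split,
  then \<open>P\<close> splits: the missing linear factor would have a real root, which would be double.\<close>
lemma simple_roots_split:
  fixes P :: "real poly"
  assumes P0: "P \<noteq> 0" and many: "degree P \<le> card {x. poly P x = 0} + 1"
    and simple: "\<And>s. poly P s = 0 \<Longrightarrow> poly (pderiv P) s \<noteq> 0"
  shows "simple_root_set P {x. poly P x = 0}"
proof -
  define S where "S = {x. poly P x = 0}"
  have fin: "finite S" unfolding S_def using poly_roots_finite[OF P0] .
  have "card S = degree P"
  proof (rule ccontr)
    assume ne: "card S \<noteq> degree P"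
    have "card S \<le> degree P" unfolding S_def using card_poly_roots_bound[OF P0] .
    with ne many have cS: "card S + 1 = degree P" unfolding S_def by linarith
    obtain g where g: "P = (\<Prod>s\<in>S. [:-s, 1:]) * g"
      using prod_linear_factors_dvd[OF fin] unfolding S_def by (auto elim: dvdE)
    have g0: "g \<noteq> 0" using g P0 by auto
    have "degree (\<Prod>s\<in>S. [:-s, 1:]) = card S"
      by (subst degree_prod_eq_sum_degree) auto
    moreover have "(\<Prod>s\<in>S. [:-s, 1:]) \<noteq> (0::real poly)" using fin by (simp add: prod_zero_iff)
    ultimately have "degree P = card S + degree g" using g g0 by (simp add: degree_mult_eq)
    then have dg: "degree g = 1" using cS by simp
    define s0 where "s0 = - coeff g 0 / coeff g 1"
    have "coeff g 1 \<noteq> 0" using dg g0 by (metis leading_coeff_0_iff)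
    moreover have "poly g s0 = coeff g 0 + coeff g 1 * s0" by (simp add: poly_altdef dg)
    ultimately have gs0: "poly g s0 = 0" by (simp add: s0_def)
    have "poly P s0 = 0" by (subst g) (simp add: gs0)
    then have "s0 \<in> S" by (simp add: S_def)
    then have "(\<Prod>s\<in>S. [:-s, 1:]) = [:-s0, 1:] * (\<Prod>s\<in>S-{s0}. [:-s, 1:])"
      using fin by (simp add: prod.remove)
    then have "P = [:-s0, 1:] * ((\<Prod>s\<in>S-{s0}. [:-s, 1:]) * g)" using g by (simp add: ac_simps)
    from pderiv_at_linear_factor[OF this] have "poly (pderiv P) s0 = 0" using gs0 by simp
    then show False using simple \<open>s0 \<in> S\<close> by (auto simp: S_def)
  qed
  then show ?thesis using fin simple by (simp add: simple_root_set_def S_def)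
qed


section \<open>Lagrange interpolation and partial fractions\<close>

lemma lagrange_interpolation:
  fixes P Q :: "real poly"
  assumes S: "simple_root_set P S" and dQ: "degree Q < degree P"
  shows "Q = (\<Sum>s\<in>S. smult (poly Q s / poly (pderiv P) s) (P div [:-s, 1:]))"
proof -
  have fin: "finite S" and cS: "card S = degree P"
    and rS: "\<And>s. s \<in> S \<Longrightarrow> poly P s = 0" and dS: "\<And>s. s \<in> S \<Longrightarrow> poly (pderiv P) s \<noteq> 0"
    using S by (auto simp: simple_root_set_def)
  define g where "g s = P div [:-s, 1:]" for s
  define c where "c s = poly Q s / poly (pderiv P) s" for s
  have Pg: "P = [:-s, 1:] * g s" if "s \<in> S" for s
    using rS[OF that] by (simp add: g_def poly_eq_0_iff_dvd)
  text \<open>Both sides have degree below \<open>card S\<close> and agree on \<open>S\<close>, since \<open>g s\<close> vanishes on \<open>S - {s}\<close>.\<close>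
  have "Q = (\<Sum>s\<in>S. smult (c s) (g s))"
  proof (rule poly_eqI_degree[of S])
    fix t assume t: "t \<in> S"
    have gt: "poly (g s) t = 0" if "s \<in> S - {t}" for s
      using Pg[of s] rS[OF t] that by auto
    have "poly (\<Sum>s\<in>S. smult (c s) (g s)) t = c t * poly (g t) t + (\<Sum>s\<in>S-{t}. c s * poly (g s) t)"
      using fin t by (simp add: poly_sum sum.remove)
    also have "(\<Sum>s\<in>S-{t}. c s * poly (g s) t) = 0"
      using gt by (intro sum.neutral) auto
    also have "c t * poly (g t) t = poly Q t"
      using pderiv_at_linear_factor[OF Pg[OF t]] dS[OF t] by (simp add: c_def)
    finally show "poly Q t = poly (\<Sum>s\<in>S. smult (c s) (g s)) t" by simp
  next
    show "degree Q < card S" using dQ cS by simp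
    have deg_term: "degree (smult (c s) (g s)) < card S" if s: "s \<in> S" for s
    proof -
      have "g s \<noteq> 0" using Pg[OF s] dQ by auto
      then have "degree P = 1 + degree (g s)" using Pg[OF s] by (simp add: degree_mult_eq)
      then show ?thesis using degree_smult_le[of "c s" "g s"] cS by linarith
    qed
    have "degree (\<Sum>s\<in>S. smult (c s) (g s)) \<le> card S - 1"
    proof (rule degree_sum_le[OF fin])
      fix s assume "s \<in> S"
      then show "degree (smult (c s) (g s)) \<le> card S - 1" using deg_term by fastforce
    qed
    then show "degree (\<Sum>s\<in>S. smult (c s) (g s)) < card S" using dQ cS by linarith
  qed
  then show ?thesis by (simp add: c_def g_def)
qed

lemma pderiv_sum: "pderiv (sum f A) = (\<Sum>x\<in>A. pderiv (f x))"
  by (induction A rule: infinite_finite_induct) (simp_all add: pderiv_add)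

lemma wronskian_partial_fractions:
  fixes P Q :: "real poly"
  assumes S: "simple_root_set P S" and dQ: "degree Q < degree P"
  shows "Q * pderiv P - P * pderiv Q =
     (\<Sum>s\<in>S. smult (poly Q s / poly (pderiv P) s) ((P div [:-s, 1:])^2))"
proof -
  define g where "g s = P div [:-s, 1:]" for s
  define c where "c s = poly Q s / poly (pderiv P) s" for s
  have Pg: "P = [:-s, 1:] * g s" if "s \<in> S" for s
    using S that by (simp add: simple_root_set_def g_def poly_eq_0_iff_dvd)
  have Q: "Q = (\<Sum>s\<in>S. smult (c s) (g s))"
    using lagrange_interpolation[OF S dQ] by (simp add: c_def g_def)
  have "Q * pderiv P - P * pderiv Q = (\<Sum>s\<in>S. smult (c s) (g s * pderiv P - P * pderiv (g s)))"
  proof -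
    have 1: "Q * pderiv P = (\<Sum>s\<in>S. smult (c s) (g s * pderiv P))"
      by (subst Q) (simp add: sum_distrib_right)
    have 2: "P * pderiv Q = (\<Sum>s\<in>S. smult (c s) (P * pderiv (g s)))"
      by (subst Q) (simp add: pderiv_sum pderiv_smult sum_distrib_left)
    show ?thesis unfolding 1 2 by (simp add: sum_subtractf[symmetric] smult_diff_right)
  qed
  also have "\<dots> = (\<Sum>s\<in>S. smult (c s) ((g s)^2))"
  proof (rule sum.cong[OF refl])
    fix s assume s: "s \<in> S"
    have "pderiv P = [:-s, 1:] * pderiv (g s) + g s"
      by (subst Pg[OF s]) (simp add: pderiv_mult pderiv_pCons)
    then have "g s * pderiv P - P * pderiv (g s) = (g s)^2"
      by (subst (2) Pg[OF s]) (simp add: algebra_simps power2_eq_square)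
    then show "smult (c s) (g s * pderiv P - P * pderiv (g s)) = smult (c s) ((g s)^2)" by simp
  qed
  finally show ?thesis by (simp add: c_def g_def)
qed

lemma cpx_linear_cofactor:
  assumes "poly P s = 0"
  shows "poly (cpx P) z = (z - complex_of_real s) * poly (cpx (P div [:-s, 1:])) z"
proof -
  have "P = [:-s, 1:] * (P div [:-s, 1:])" using assms by (simp add: poly_eq_0_iff_dvd)
  then have "cpx P = cpx [:-s, 1:] * cpx (P div [:-s, 1:])" by (metis cpx_mult)
  then show ?thesis by (simp add: poly_cpx_linear)
qed

lemma cpx_lagrange_interpolation:
  assumes S: "simple_root_set P S" and dQ: "degree Q < degree P"
  shows "poly (cpx Q) z =
     (\<Sum>s\<in>S. complex_of_real (poly Q s / poly (pderiv P) s) * poly (cpx (P div [:-s, 1:])) z)"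
  by (subst lagrange_interpolation[OF S dQ]) (simp add: cpx_sum cpx_smult poly_sum)

text \<open>A polynomial that splits over the reals has no non-real complex roots
  (interpolate the constant \<open>1\<close>).\<close>
lemma split_complex_roots_real:
  assumes S: "simple_root_set P S" and deg: "0 < degree P" and z: "poly (cpx P) z = 0"
  shows "z \<in> complex_of_real ` S"
proof (rule ccontr)
  assume nin: "z \<notin> complex_of_real ` S"
  have "poly (cpx (P div [:-s, 1:])) z = 0" if "s \<in> S" for s
    using cpx_linear_cofactor[of P s z] S that z nin by (auto simp: simple_root_set_def)
  then have "poly (cpx 1) z = 0"
    using cpx_lagrange_interpolation[OF S, of 1 z] deg by simp
  then show False by (simp add: cpx_def)
qed

lemma complex_partial_fractions:
  assumes S: "simple_root_set P S" and dQ: "degree Q < degree P" and z: "poly (cpx P) z \<noteq> 0"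
  shows "poly (cpx Q) z / poly (cpx P) z =
         (\<Sum>s\<in>S. complex_of_real (poly Q s / poly (pderiv P) s) / (z - complex_of_real s))"
proof -
  have cof: "poly (cpx (P div [:-s, 1:])) z = poly (cpx P) z / (z - complex_of_real s)"
    if s: "s \<in> S" for s
  proof -
    have "poly P s = 0" using S s by (simp add: simple_root_set_def)
    moreover from this have "z \<noteq> complex_of_real s" using z by (auto simp: poly_cpx_of_real)
    ultimately show ?thesis using cpx_linear_cofactor[of P s z] by (simp add: field_simps)
  qed
  have "poly (cpx Q) z =
        poly (cpx P) z * (\<Sum>s\<in>S. complex_of_real (poly Q s / poly (pderiv P) s) / (z - complex_of_real s))"
    unfolding cpx_lagrange_interpolation[OF S dQ]
    by (simp add: cof sum_distrib_left field_simps cong: sum.cong)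
  then show ?thesis using z by simp
qed


section \<open>A quarter-plane sector\<close>

definition in_sector :: "complex \<Rightarrow> bool" where
  "in_sector x \<longleftrightarrow> \<bar>Im x\<bar> < Re x"

lemma sector_nonzero: "in_sector x \<Longrightarrow> x \<noteq> 0"
  by (auto simp: in_sector_def)

lemma sector_inverse:
  assumes "in_sector x" shows "in_sector (inverse x)"
proof -
  have "Re x > 0" using assms unfolding in_sector_def by (meson abs_ge_zero le_less_trans)
  then have "(Re x)\<^sup>2 + (Im x)\<^sup>2 > 0" by (simp add: add_pos_nonneg)
  then show ?thesis using assms by (auto simp: in_sector_def abs_div divide_strict_right_mono)
qed

lemma sector_mult_Re_pos:
  assumes "in_sector x" "in_sector y" shows "Re (x * y) > 0"
proof -
  have "\<bar>Im x\<bar> * \<bar>Im y\<bar> < Re x * Re y"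
    using assms by (auto simp: in_sector_def intro: mult_strict_mono' abs_ge_zero le_less_trans)
  moreover have "Im x * Im y \<le> \<bar>Im x\<bar> * \<bar>Im y\<bar>" by (metis abs_ge_self abs_mult)
  ultimately show ?thesis by simp
qed

lemma Re_inverse_pos: "Re x > 0 \<Longrightarrow> Re (inverse x) > 0"
proof -
  assume "Re x > 0"
  moreover from this have "(Re x)\<^sup>2 + (Im x)\<^sup>2 > 0" by (simp add: add_pos_nonneg)
  ultimately show ?thesis by simp
qed

lemma sector_add_scaled:
  assumes u: "in_sector u" and v: "in_sector v" and t: "t \<ge> 0"
  shows "in_sector (u + complex_of_real t * (u + v))"
proof -
  have "\<bar>(1+t) * Im u + t * Im v\<bar> \<le> (1+t) * \<bar>Im u\<bar> + t * \<bar>Im v\<bar>"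
    using abs_triangle_ineq[of "(1+t) * Im u" "t * Im v"] t by (simp add: abs_mult)
  moreover have "(1+t) * \<bar>Im u\<bar> < (1+t) * Re u" using u t unfolding in_sector_def by simp
  moreover have "t * \<bar>Im v\<bar> \<le> t * Re v" using v t unfolding in_sector_def by (simp add: mult_left_mono)
  ultimately show ?thesis unfolding in_sector_def by (simp add: algebra_simps)
qed

text \<open>If \<open>A\<close> and \<open>B\<close> make an acute angle, their bisector \<open>|B| A + |A| B\<close>, divided by \<open>A\<close>,
  lies in the sector.\<close>
lemma sector_bisector:
  assumes A0: "A \<noteq> 0" and acute: "Re (B * cnj A) > 0"
  shows "in_sector (complex_of_real (cmod B) + B * complex_of_real (cmod A) / A)"
proof -
  define \<omega> where "\<omega> = B * complex_of_real (cmod A) / A"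
  have nA: "cmod A > 0" using A0 by simp
  have "A * cnj A = complex_of_real (cmod A) * complex_of_real (cmod A)"
    using complex_norm_square[of A] by (metis of_real_mult power2_eq_square)
  then have w: "\<omega> = B * cnj A / complex_of_real (cmod A)"
    using A0 unfolding \<omega>_def by (simp add: field_simps)
  have "Re \<omega> > 0" using acute nA by (simp add: w Re_divide_of_real)
  moreover have "cmod \<omega> = cmod B" using nA by (simp add: w norm_mult norm_divide)
  moreover have "\<bar>Im \<omega>\<bar> \<le> cmod \<omega>" by (rule abs_Im_le_cmod)
  ultimately show ?thesis unfolding \<omega>_def[symmetric] in_sector_def by simp
qed

lemma dist_of_real_c: "dist (complex_of_real x) (complex_of_real y) = \<bar>x - y\<bar>"
  by (simp add: dist_norm flip: of_real_diff)

definition diam_disk :: "real \<Rightarrow> real \<Rightarrow> complex set" where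
  "diam_disk a b = ball (complex_of_real ((a + b) / 2)) ((b - a) / 2)"

lemma real_in_diam_disk: "complex_of_real s \<in> diam_disk a b \<longleftrightarrow> a < s \<and> s < b"
proof -
  have "complex_of_real s \<in> diam_disk a b \<longleftrightarrow> \<bar>(a + b) / 2 - s\<bar> < (b - a) / 2"
    by (simp only: diam_disk_def mem_ball dist_of_real_c)
  also have "\<dots> \<longleftrightarrow> a < s \<and> s < b" by (auto simp: abs_less_iff field_simps)
  finally show ?thesis .
qed

text \<open>Thales: a point of the disk sees its diameter \<open>[a, b]\<close> at an obtuse angle.\<close>
lemma thales_Re_pos:
  assumes "z \<in> diam_disk a b"
  shows "Re ((z - complex_of_real a) * cnj (complex_of_real b - z)) > 0"
proof -
  have "cmod (z - complex_of_real ((a+b)/2)) < (b-a)/2"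
    using assms by (simp add: diam_disk_def dist_norm norm_minus_commute)
  then have "(cmod (z - complex_of_real ((a+b)/2)))^2 < ((b-a)/2)^2"
    by (meson norm_ge_zero power_strict_mono zero_less_numeral)
  then have "(Re z - (a+b)/2)^2 + (Im z)^2 < ((b-a)/2)^2"
    by (simp add: cmod_power2)
  moreover have "Re ((z - complex_of_real a) * cnj (complex_of_real b - z)) =
     ((b-a)/2)^2 - ((Re z - (a+b)/2)^2 + (Im z)^2)"
    by (simp add: power2_eq_square algebra_simps divide_simps)
  ultimately show ?thesis by linarith
qed

lemma sector_direction_endpoints:
  assumes "z \<in> diam_disk a b"
  shows "\<exists>l. l \<noteq> 0 \<and> in_sector ((z - complex_of_real a) / l) \<and> in_sector ((complex_of_real b - z) / l)"
proof -
  define A where "A = z - complex_of_real a"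
  define B where "B = complex_of_real b - z"
  have p1: "Re (A * cnj B) > 0" using thales_Re_pos[OF assms] by (simp add: A_def B_def)
  have A0: "A \<noteq> 0" and B0: "B \<noteq> 0" using p1 by auto
  have p2: "Re (B * cnj A) > 0" using p1 by (simp add: mult.commute)
  define l where "l = A * complex_of_real (cmod B) + B * complex_of_real (cmod A)"
  have "l / A = complex_of_real (cmod B) + B * complex_of_real (cmod A) / A"
    using A0 by (simp add: l_def field_simps)
  then have k1: "in_sector (l / A)" using sector_bisector[OF A0 p2] by simp
  have "l / B = complex_of_real (cmod A) + A * complex_of_real (cmod B) / B"
    using B0 by (simp add: l_def field_simps)
  then have k2: "in_sector (l / B)" using sector_bisector[OF B0 p1] by simp
  have "l \<noteq> 0" using sector_nonzero[OF k1] by auto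
  moreover have "in_sector (A / l)" "in_sector (B / l)"
    using sector_inverse[OF k1] sector_inverse[OF k2] by (simp_all add: inverse_eq_divide)
  ultimately show ?thesis by (auto simp: A_def B_def)
qed

lemma sector_direction_outside:
  assumes ab: "a < b" and z: "z \<in> diam_disk a b"
  shows "\<exists>l. l \<noteq> 0 \<and> (\<forall>s. s \<le> a \<longrightarrow> in_sector ((z - complex_of_real s) / l))
                     \<and> (\<forall>s. b \<le> s \<longrightarrow> in_sector ((complex_of_real s - z) / l))"
proof -
  obtain l where l: "l \<noteq> 0" and kA: "in_sector ((z - complex_of_real a) / l)"
    and kB: "in_sector ((complex_of_real b - z) / l)"
    using sector_direction_endpoints[OF z] by blast
  define U where "U = (z - complex_of_real a) / l"
  define V where "V = (complex_of_real b - z) / l"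
  have "in_sector ((z - complex_of_real s) / l)" if "s \<le> a" for s
  proof -
    have "(z - complex_of_real s) / l = U + complex_of_real ((a - s)/(b - a)) * (U + V)"
      using ab l by (simp add: U_def V_def field_simps)
    then show ?thesis using sector_add_scaled[of U V "(a-s)/(b-a)"] kA kB ab that
      by (simp add: U_def V_def)
  qed
  moreover have "in_sector ((complex_of_real s - z) / l)" if "b \<le> s" for s
  proof -
    have "(complex_of_real s - z) / l = V + complex_of_real ((s - b)/(b - a)) * (V + U)"
      using ab l by (simp add: U_def V_def field_simps)
    then show ?thesis using sector_add_scaled[of V U "(s-b)/(b-a)"] kA kB ab that
      by (simp add: U_def V_def)
  qed
  ultimately show ?thesis using l by blast
qed

lemma cauchy_transform_difference:
  assumes "\<And>s. s \<in> S \<Longrightarrow> z \<noteq> complex_of_real s \<and> w \<noteq> complex_of_real s"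
  shows "(\<Sum>s\<in>S. complex_of_real (d s) / (z - complex_of_real s)) -
           (\<Sum>s\<in>S. complex_of_real (d s) / (w - complex_of_real s)) =
         (w - z) * (\<Sum>s\<in>S. complex_of_real (d s) / ((z - complex_of_real s) * (w - complex_of_real s)))"
  unfolding sum_subtractf[symmetric] sum_distrib_left
  by (rule sum.cong[OF refl]) (use assms in \<open>simp add: field_simps\<close>)

lemma cauchy_transform_inj:
  fixes S :: "real set" and d :: "real \<Rightarrow> real" and \<sigma> :: real
  assumes ab: "a < b" and fin: "finite S" and ne: "S \<noteq> {}"
    and out: "\<forall>s\<in>S. s \<le> a \<or> b \<le> s" and sg: "\<forall>s\<in>S. \<sigma> * d s > 0"
    and z: "z \<in> diam_disk a b" and w: "w \<in> diam_disk a b"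
    and eq: "(\<Sum>s\<in>S. complex_of_real (d s) / (z - complex_of_real s)) =
             (\<Sum>s\<in>S. complex_of_real (d s) / (w - complex_of_real s))"
  shows "z = w"
proof -
  obtain l1 where l1: "l1 \<noteq> 0" "\<forall>s. s \<le> a \<longrightarrow> in_sector ((z - complex_of_real s) / l1)"
      "\<forall>s. b \<le> s \<longrightarrow> in_sector ((complex_of_real s - z) / l1)"
    using sector_direction_outside[OF ab z] by blast
  obtain l2 where l2: "l2 \<noteq> 0" "\<forall>s. s \<le> a \<longrightarrow> in_sector ((w - complex_of_real s) / l2)"
      "\<forall>s. b \<le> s \<longrightarrow> in_sector ((complex_of_real s - w) / l2)"
    using sector_direction_outside[OF ab w] by blast
  define X where "X s = (if s \<le> a then (z - complex_of_real s) / l1 else (complex_of_real s - z) / l1)" for s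
  define Y where "Y s = (if s \<le> a then (w - complex_of_real s) / l2 else (complex_of_real s - w) / l2)" for s
  have KX: "in_sector (X s)" and KY: "in_sector (Y s)" if "s \<in> S" for s
    using out that l1 l2 by (auto simp: X_def Y_def)
  have prod: "(z - complex_of_real s) * (w - complex_of_real s) = l1 * l2 * (X s * Y s)" for s
    using l1(1) l2(1) by (simp add: X_def Y_def field_simps)
  have nz: "z \<noteq> complex_of_real s \<and> w \<noteq> complex_of_real s" if "s \<in> S" for s
    using sector_nonzero[OF KX[OF that]] sector_nonzero[OF KY[OF that]]
    by (auto simp: X_def Y_def split: if_splits)
  text \<open>The sum \<open>G\<close> below is nonzero: \<open>\<sigma> G\<close> has positive real part termwise.\<close>
  define G where "G = (\<Sum>s\<in>S. complex_of_real (d s) * inverse (X s * Y s))"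
  have "Re (complex_of_real \<sigma> * G) = (\<Sum>s\<in>S. (\<sigma> * d s) * Re (inverse (X s * Y s)))"
    by (simp add: G_def sum_distrib_left Re_sum mult.assoc)
  also have "\<dots> > 0"
  proof (rule sum_pos[OF fin ne])
    fix s assume s: "s \<in> S"
    have "Re (inverse (X s * Y s)) > 0"
      using Re_inverse_pos sector_mult_Re_pos KX[OF s] KY[OF s] by blast
    then show "0 < \<sigma> * d s * Re (inverse (X s * Y s))" using sg s by simp
  qed
  finally have G0: "G \<noteq> 0" by auto
  have "(\<Sum>s\<in>S. complex_of_real (d s) / ((z - complex_of_real s) * (w - complex_of_real s))) =
        inverse (l1 * l2) * G"
    unfolding G_def sum_distrib_left prod using l1(1) l2(1) by (simp add: field_simps)
  moreover have "(w - z) * (\<Sum>s\<in>S. complex_of_real (d s) / ((z - complex_of_real s) * (w - complex_of_real s))) = 0"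
    using cauchy_transform_difference[of S z w d, OF nz] eq by simp
  ultimately show ?thesis using G0 l1(1) l2(1) by simp
qed


section \<open>Real disks in CP^1\<close>

lemma cnj_ball: "cnj ` ball c r = ball (cnj c) r"
proof -
  have d: "dist (cnj c) (cnj x) = dist c x" for x
    by (simp add: dist_norm flip: complex_cnj_diff)
  show ?thesis
  proof
    show "cnj ` ball c r \<subseteq> ball (cnj c) r" using d by auto
    show "ball (cnj c) r \<subseteq> cnj ` ball c r"
    proof
      fix x assume "x \<in> ball (cnj c) r"
      then have "cnj x \<in> ball c r" using d[of "cnj x"] by simp
      then show "x \<in> cnj ` ball c r" by (metis complex_cnj_cnj image_eqI)
    qed
  qed
qed

lemma real_disk_diam_disk:
  assumes "a < b" shows "real_disk (Some ` diam_disk a b)"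
proof -
  have "map_option cnj ` Some ` diam_disk a b = Some ` (cnj ` diam_disk a b)"
    by (simp add: image_image)
  also have "\<dots> = Some ` diam_disk a b" by (simp add: cnj_ball diam_disk_def)
  moreover have "disk_cp1 (Some ` diam_disk a b)"
    unfolding disk_cp1_def diam_disk_def using assms
    by (intro disjI1 exI[of _ "complex_of_real ((a + b) / 2)"] exI[of _ "(b - a) / 2"]) simp
  ultimately show ?thesis unfolding real_disk_def by simp
qed

lemma disk_contains_real_interval:
  assumes "disk_cp1 D" "Some (complex_of_real t) \<in> D"
  shows "\<exists>e>0. \<forall>x. \<bar>x - t\<bar> < e \<longrightarrow> Some (complex_of_real x) \<in> D"
  using assms(1) unfolding disk_cp1_def
proof (elim disjE exE conjE)
  fix c r assume D: "D = Some ` ball c r"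
  then have "dist c (complex_of_real t) < r" using assms(2) by auto
  moreover have "Some (complex_of_real x) \<in> D" if "\<bar>x - t\<bar> < r - dist c (complex_of_real t)" for x
  proof -
    have "dist c (complex_of_real x) \<le> dist c (complex_of_real t) + dist (complex_of_real t) (complex_of_real x)"
      by (rule dist_triangle)
    also have "\<dots> < r" using that by (simp add: dist_of_real_c dist_real_def abs_minus_commute)
    finally show ?thesis using D by auto
  qed
  ultimately show ?thesis by (intro exI[of _ "r - dist c (complex_of_real t)"]) auto
next
  fix w a0 assume D: "D = Some ` {z. a0 < Re (z * cnj w)}"
  have re: "Re (complex_of_real x * cnj w) = x * Re w" for x by simp
  have t: "t * Re w > a0" using assms(2) D re by auto
  define e where "e = (t * Re w - a0) / (\<bar>Re w\<bar> + 1)"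
  have e0: "e > 0" using t by (simp add: e_def)
  have "a0 < x * Re w" if "\<bar>x - t\<bar> < e" for x
  proof -
    have "\<bar>x - t\<bar> * \<bar>Re w\<bar> \<le> e * \<bar>Re w\<bar>" using that by (simp add: mult_right_mono)
    also have "\<dots> < e * (\<bar>Re w\<bar> + 1)" using e0 by simp
    also have "\<dots> = t * Re w - a0" by (simp add: e_def)
    finally have "\<bar>(x - t) * Re w\<bar> < t * Re w - a0" by (simp add: abs_mult)
    then show ?thesis by (simp add: algebra_simps abs_less_iff)
  qed
  then show ?thesis using e0 D re by auto
next
  fix c r assume D: "D = insert None (Some ` (- cball c r))"
  then have "dist c (complex_of_real t) > r" using assms(2) by auto
  moreover have "Some (complex_of_real x) \<in> D" if "\<bar>x - t\<bar> < dist c (complex_of_real t) - r" for x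
  proof -
    have "dist c (complex_of_real t) \<le> dist c (complex_of_real x) + dist (complex_of_real x) (complex_of_real t)"
      by (rule dist_triangle)
    then have "r < dist c (complex_of_real x)" using that by (simp add: dist_of_real_c dist_real_def)
    then show ?thesis using D by auto
  qed
  ultimately show ?thesis by (intro exI[of _ "dist c (complex_of_real t) - r"]) auto
qed

lemma real_disk_ball_center:
  assumes r: "r > 0" and rd: "real_disk (Some ` ball c r)"
  shows "c = complex_of_real (Re c)"
proof -
  have "Some ` (cnj ` ball c r) = Some ` ball c r"
    using rd by (simp add: real_disk_def image_image)
  then have "ball (cnj c) r = ball c r" by (simp add: inj_image_eq_iff cnj_ball)
  then have "cnj c = c" using r by (simp add: ball_eq_ball_iff)
  then show ?thesis by (simp add: complex_eq_iff)
qed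

lemma real_ball_between_endpoints:
  assumes ab: "a < b"
    and inside: "{a<..<b} \<subseteq> {x. complex_of_real x \<in> ball (complex_of_real c) r}"
    and na: "complex_of_real a \<notin> ball (complex_of_real c) r"
    and nb: "complex_of_real b \<notin> ball (complex_of_real c) r"
  shows "ball (complex_of_real c) r = diam_disk a b"
proof -
  have trace: "{x. complex_of_real x \<in> ball (complex_of_real c) r} = {c - r<..<c + r}"
    by (auto simp: dist_of_real_c dist_real_def abs_less_iff)
  have "c - r \<le> a" "b \<le> c + r"
    using inside ab unfolding trace greaterThanLessThan_subseteq_greaterThanLessThan by auto
  moreover have "a \<notin> {c - r<..<c + r}" "b \<notin> {c - r<..<c + r}"
    using na nb unfolding trace[symmetric] by simp_all
  ultimately have "a = c - r" "b = c + r" using ab by (auto simp: not_less)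
  then show ?thesis by (simp add: diam_disk_def)
qed

lemma real_disk_contains_endpoint:
  assumes ab: "a < b" and rd: "real_disk D" and sub: "Some ` diam_disk a b \<subset> D"
  shows "Some (complex_of_real a) \<in> D \<or> Some (complex_of_real b) \<in> D"
proof (rule ccontr)
  define m where "m = (a + b) / 2"
  assume "\<not> ?thesis"
  then have na: "Some (complex_of_real a) \<notin> D" and nb: "Some (complex_of_real b) \<notin> D" by auto
  have inside: "Some (complex_of_real x) \<in> D" if "a < x" "x < b" for x
  proof -
    have "Some (complex_of_real x) \<in> Some ` diam_disk a b" using that real_in_diam_disk by simp
    then show ?thesis using sub by blast
  qed
  have inm: "Some (complex_of_real m) \<in> D" using inside[of m] ab by (simp add: m_def)
  from rd show False unfolding real_disk_def disk_cp1_def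
  proof (elim conjE disjE exE)
    fix c r assume r: "r > 0" and D: "D = Some ` ball c r"
    have "c = complex_of_real (Re c)" using real_disk_ball_center[OF r] rd unfolding D .
    then obtain cr where c: "c = complex_of_real cr" by blast
    have mem: "Some (complex_of_real x) \<in> D \<longleftrightarrow> complex_of_real x \<in> ball (complex_of_real cr) r" for x
      unfolding D c by blast
    have "ball (complex_of_real cr) r = diam_disk a b"
      by (rule real_ball_between_endpoints[OF ab]) (use inside na nb in \<open>auto simp: mem\<close>)
    then show False using sub unfolding D c by simp
  next
    fix w a0 assume D: "D = Some ` {z. a0 < Re (z * cnj w)}"
    have "a * Re w \<le> a0" "b * Re w \<le> a0" "a0 < m * Re w" using na nb inm by (auto simp: D)
    then show False by (simp add: m_def algebra_simps)
  next
    fix c r assume D: "D = insert None (Some ` (- cball c r))"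
    have "norm (complex_of_real a - c) \<le> r" "norm (complex_of_real b - c) \<le> r"
      using na nb by (auto simp: D dist_norm norm_minus_commute)
    moreover have "norm (complex_of_real m - c) > r" using inm by (auto simp: D dist_norm norm_minus_commute)
    moreover have "norm ((complex_of_real a - c) + (complex_of_real b - c)) = 2 * norm (complex_of_real m - c)"
    proof -
      have "(complex_of_real a - c) + (complex_of_real b - c) = 2 * (complex_of_real m - c)"
        by (simp add: m_def field_simps)
      then show ?thesis by (simp only: norm_mult norm_numeral)
    qed
    ultimately show False using norm_triangle_ineq[of "complex_of_real a - c" "complex_of_real b - c"]
      by linarith
  qed
qed

lemma real_disk_beyond_diameter:
  assumes ab: "a < b" and rd: "real_disk D" and sub: "Some ` diam_disk a b \<subset> D"
    and F: "finite F"
  shows "\<exists>x. x \<notin> F \<and> (x < a \<or> b < x) \<and> Some (complex_of_real x) \<in> D"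
proof -
  have avoid: "\<exists>x. l < x \<and> x < u \<and> x \<notin> F" if "l < u" for l u
  proof -
    have "infinite ({l<..<u} - F)" using that F by (intro Diff_infinite_finite) auto
    then obtain x where "x \<in> {l<..<u} - F" using infinite_imp_nonempty by blast
    then show ?thesis by auto
  qed
  have dk: "disk_cp1 D" using rd by (simp add: real_disk_def)
  from real_disk_contains_endpoint[OF ab rd sub] show ?thesis
  proof
    assume "Some (complex_of_real a) \<in> D"
    then obtain e where "e > 0" and e: "\<And>x. \<bar>x - a\<bar> < e \<Longrightarrow> Some (complex_of_real x) \<in> D"
      using disk_contains_real_interval[OF dk] by blast
    obtain x where x: "a - e < x" "x < a" "x \<notin> F" using avoid[of "a - e" a] \<open>e > 0\<close> by auto
    then have "Some (complex_of_real x) \<in> D" using e by simp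
    then show ?thesis using x by blast
  next
    assume "Some (complex_of_real b) \<in> D"
    then obtain e where "e > 0" and e: "\<And>x. \<bar>x - b\<bar> < e \<Longrightarrow> Some (complex_of_real x) \<in> D"
      using disk_contains_real_interval[OF dk] by blast
    obtain x where x: "b < x" "x < b + e" "x \<notin> F" using avoid[of b "b + e"] \<open>e > 0\<close> by auto
    then have "Some (complex_of_real x) \<in> D" using e by simp
    then show ?thesis using x by blast
  qed
qed


lemma sorted_list_of_set_adjacent:
  fixes A :: "'a::linorder set"
  assumes fin: "finite A" and i: "Suc i < card A"
  defines "xs \<equiv> sorted_list_of_set A"
  shows "xs ! i < xs ! Suc i" "xs ! i \<in> A" "xs ! Suc i \<in> A"
    "\<forall>s\<in>A. s \<le> xs ! i \<or> xs ! Suc i \<le> s"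
proof -
  have len: "length xs = card A" and set: "set xs = A" and sw: "sorted_wrt (<) xs"
    using fin by (simp_all add: xs_def)
  show "xs ! i < xs ! Suc i" using sorted_wrt_nth_less[OF sw, of i "Suc i"] i len by simp
  show "xs ! i \<in> A" "xs ! Suc i \<in> A" using set i len nth_mem[of i xs] nth_mem[of "Suc i" xs] by auto
  show "\<forall>s\<in>A. s \<le> xs ! i \<or> xs ! Suc i \<le> s"
  proof
    fix s assume "s \<in> A"
    then obtain n where n: "n < card A" "s = xs ! n" using set len by (auto simp: in_set_conv_nth)
    show "s \<le> xs ! i \<or> xs ! Suc i \<le> s"
    proof (cases "n \<le> i")
      case True
      then show ?thesis using sorted_wrt_nth_less[OF sw, of n i] n i len by (cases "n = i") auto
    next
      case False
      then show ?thesis using sorted_wrt_nth_less[OF sw, of "Suc i" n] n len by (cases "n = Suc i") auto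
    qed
  qed
qed


section \<open>Interlacing polynomials\<close>

locale interlacing =
  fixes p q :: "real poly" and k :: nat and ps qs :: "nat \<Rightarrow> real"
  assumes k2: "k \<ge> 2" and deg_p: "degree p = k" and deg_q: "degree q = k - 1"
    and roots_p_cpx: "{z. poly (cpx p) z = 0} = complex_of_real ` ps ` {1..k}"
    and roots_q_cpx: "{z. poly (cpx q) z = 0} = complex_of_real ` qs ` {1..k-1}"
    and simple_p: "\<forall>i\<in>{1..k}. order (ps i) p = 1"
    and simple_q: "\<forall>i\<in>{1..k-1}. order (qs i) q = 1"
    and interlace: "\<forall>i\<in>{1..k-1}. ps i < qs i \<and> qs i < ps (Suc i)"
begin

lemma p_nonzero: "p \<noteq> 0" using deg_p k2 by auto

lemma q_nonzero: "q \<noteq> 0" using deg_q k2 by auto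

lemma ps_less: "1 \<le> i \<Longrightarrow> i < l \<Longrightarrow> l \<le> k \<Longrightarrow> ps i < ps l"
  using lift_Suc_mono_less_ivl[of "{1..k-1}" ps i l] interlace by fastforce

lemma ps_le: "1 \<le> i \<Longrightarrow> i \<le> l \<Longrightarrow> l \<le> k \<Longrightarrow> ps i \<le> ps l"
  using ps_less by (cases "i = l") (auto simp: less_imp_le)

lemma ps_inj: "inj_on ps {1..k}"
  by (rule inj_onI) (metis atLeastAtMost_iff linorder_neqE_nat order_less_irrefl ps_less)

lemma roots_p: "poly p x = 0 \<longleftrightarrow> x \<in> ps ` {1..k}"
proof -
  have "poly p x = 0 \<longleftrightarrow> complex_of_real x \<in> {z. poly (cpx p) z = 0}"
    by (simp add: poly_cpx_of_real)
  then show ?thesis unfolding roots_p_cpx by (auto simp: image_iff)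
qed

lemma roots_q: "poly q x = 0 \<longleftrightarrow> x \<in> qs ` {1..k-1}"
proof -
  have "poly q x = 0 \<longleftrightarrow> complex_of_real x \<in> {z. poly (cpx q) z = 0}"
    by (simp add: poly_cpx_of_real)
  then show ?thesis unfolding roots_q_cpx by (auto simp: image_iff)
qed

lemma ps_ne_qs:
  assumes i: "i \<in> {1..k}" and l: "l \<in> {1..k-1}" shows "ps i \<noteq> qs l"
proof (cases "l < i")
  case True
  then have "qs l < ps (Suc l)" using interlace l by auto
  also have "ps (Suc l) \<le> ps i" using ps_le[of "Suc l" i] True i l by auto
  finally show ?thesis by simp
next
  case False
  then have "ps i \<le> ps l" using ps_le[of i l] i l by auto
  also have "ps l < qs l" using interlace l by auto
  finally show ?thesis by simp
qed

lemma no_common_root: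
  assumes "poly (cpx p) z = 0" shows "poly (cpx q) z \<noteq> 0"
proof
  assume "poly (cpx q) z = 0"
  then have "z \<in> complex_of_real ` ps ` {1..k}" "z \<in> complex_of_real ` qs ` {1..k-1}"
    using assms roots_p_cpx roots_q_cpx by blast+
  then obtain i l where "i \<in> {1..k}" "l \<in> {1..k-1}" "ps i = qs l" by auto
  then show False using ps_ne_qs by blast
qed

lemma no_common_real_root: "poly p x = 0 \<Longrightarrow> poly q x \<noteq> 0"
  using no_common_root[of "complex_of_real x"] by (simp add: poly_cpx_of_real)

lemma pderiv_p_at_ps: "i \<in> {1..k} \<Longrightarrow> poly (pderiv p) (ps i) \<noteq> 0"
  using simple_root_pderiv_nonzero[OF p_nonzero] simple_p by blast

lemma p_splits: "simple_root_set p (ps ` {1..k})"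
  unfolding simple_root_set_def
proof (intro conjI ballI)
  show "card (ps ` {1..k}) = degree p" using card_image[OF ps_inj] deg_p by simp
  fix s assume "s \<in> ps ` {1..k}"
  then show "poly p s = 0" "poly (pderiv p) s \<noteq> 0" using roots_p pderiv_p_at_ps by auto
qed simp

lemma pderiv_p_alternates:
  assumes i: "i \<in> {1..k-1}"
  shows "poly (pderiv p) (ps i) * poly (pderiv p) (ps (Suc i)) < 0"
proof (rule consecutive_roots_pderiv_alternates)
  have "s \<le> ps i \<or> ps (Suc i) \<le> s" if s: "poly p s = 0" for s
  proof -
    obtain l where l: "l \<in> {1..k}" "s = ps l" using s roots_p by auto
    show ?thesis
    proof (cases "l \<le> i")
      case True then show ?thesis using ps_le[of l i] l i by auto
    next
      case False then show ?thesis using ps_le[of "Suc i" l] l i by auto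
    qed
  qed
  then show "consecutive_roots p (ps i) (ps (Suc i))"
    using i ps_less[of i "Suc i"] roots_p by (auto simp: consecutive_roots_def)
qed (use i pderiv_p_at_ps in auto)

text \<open>\<open>q\<close> has exactly one (simple) root between consecutive roots of \<open>p\<close>, so it alternates in
  sign on the roots of \<open>p\<close>.\<close>
lemma q_alternates:
  assumes i: "i \<in> {1..k-1}"
  shows "poly q (ps i) * poly q (ps (Suc i)) < 0"
proof (rule simple_root_sign_change)
  show "ps i < qs i" "qs i < ps (Suc i)" using interlace i by auto
  show "poly q (qs i) = 0" using roots_q i by auto
  show "poly (pderiv q) (qs i) \<noteq> 0" using simple_root_pderiv_nonzero[OF q_nonzero] simple_q i by blast
  fix t assume t: "ps i \<le> t" "t \<le> ps (Suc i)" "poly q t = 0"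
  then obtain l where l: "l \<in> {1..k-1}" "t = qs l" using roots_q by auto
  show "t = qs i"
  proof (cases l i rule: linorder_cases)
    case less
    then have "ps (Suc l) \<le> ps i" using ps_le[of "Suc l" i] i l by auto
    then show ?thesis using interlace t l by fastforce
  next
    case greater
    then have "ps (Suc i) \<le> ps l" using ps_le[of "Suc i" l] i l by auto
    then show ?thesis using interlace t l by fastforce
  qed (use l in auto)
qed

definition res :: "real \<Rightarrow> real" where "res s = poly q s / poly (pderiv p) s"

text \<open>The common sign of the residues.\<close>
definition \<sigma> :: real where "\<sigma> = res (ps 1)"

text \<open>Consecutive residues have the same sign, since both \<open>q\<close> and \<open>p'\<close> alternate.\<close>
lemma res_consecutive_same_sign:
  assumes i: "i \<in> {1..k-1}" shows "res (ps i) * res (ps (Suc i)) > 0"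
proof -
  have "res (ps i) * res (ps (Suc i)) = (poly q (ps i) * poly q (ps (Suc i))) /
          (poly (pderiv p) (ps i) * poly (pderiv p) (ps (Suc i)))"
    by (simp add: res_def)
  also have "\<dots> > 0" using q_alternates[OF i] pderiv_p_alternates[OF i] by (simp add: divide_neg_neg)
  finally show ?thesis .
qed

lemma sigma_res: "i \<in> {1..k} \<Longrightarrow> \<sigma> * res (ps i) > 0"
proof (induction i)
  case (Suc i)
  show ?case
  proof (cases "i = 0")
    case True
    have "res (ps 1) \<noteq> 0"
      using no_common_real_root[of "ps 1"] roots_p pderiv_p_at_ps[of 1] k2 by (simp add: res_def)
    then show ?thesis using True by (auto simp: \<sigma>_def zero_less_mult_iff linorder_neq_iff)
  next
    case False
    then have "\<sigma> * res (ps i) > 0" using Suc by auto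
    moreover have "res (ps i) * res (ps (Suc i)) > 0"
      using res_consecutive_same_sign[of i] Suc.prems False by auto
    ultimately have "(\<sigma> * res (ps i)) * (res (ps i) * res (ps (Suc i))) > 0" by simp
    then have "(\<sigma> * res (ps (Suc i))) * (res (ps i))^2 > 0" by (simp add: power2_eq_square ac_simps)
    then show ?thesis by (simp add: zero_less_mult_iff)
  qed
qed simp

text \<open>The Wronskian of \<open>q\<close> and \<open>p\<close>; \<open>R' = -W/p\<^sup>2\<close>.\<close>
definition wronskian :: "real poly" where "wronskian = q * pderiv p - p * pderiv q"

text \<open>The Wronskian is a positive combination of squares, hence of constant sign \<open>\<sigma>\<close>.\<close>
lemma wronskian_expansion: "wronskian = (\<Sum>s\<in>ps ` {1..k}. smult (res s) ((p div [:-s, 1:])^2))"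
  unfolding wronskian_def res_def
  by (rule wronskian_partial_fractions[OF p_splits]) (use deg_p deg_q k2 in simp)

lemma wronskian_sign: "\<sigma> * poly wronskian x > 0"
proof -
  define h where "h s = p div [:-s, 1:]" for s
  have ph: "p = [:-s, 1:] * h s" if "s \<in> ps ` {1..k}" for s
    using roots_p that by (simp add: h_def poly_eq_0_iff_dvd)
  have "\<sigma> * poly wronskian x = (\<Sum>s\<in>ps ` {1..k}. (\<sigma> * res s) * (poly (h s) x)^2)"
    by (simp add: wronskian_expansion poly_sum sum_distrib_left h_def ac_simps)
  also have "\<dots> > 0"
  proof -
    text \<open>Some square is nonzero: take \<open>s = x\<close> if \<open>x\<close> is a root of \<open>p\<close>, else any root.\<close>
    obtain s where s: "s \<in> ps ` {1..k}" and hs: "poly (h s) x \<noteq> 0"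
    proof (cases "poly p x = 0")
      case True
      then have x: "x \<in> ps ` {1..k}" using roots_p by auto
      then have "poly (h x) x \<noteq> 0"
        using pderiv_at_linear_factor[OF ph[OF x]] pderiv_p_at_ps by auto
      then show ?thesis using that x by blast
    next
      case False
      have s1: "ps 1 \<in> ps ` {1..k}" using k2 by auto
      then have "poly (h (ps 1)) x \<noteq> 0" using False ph[OF s1] by auto
      then show ?thesis using that s1 by blast
    qed
    show ?thesis
    proof (rule sum_pos2[OF _ s])
      show "finite (ps ` {1..k})" by simp
      show "0 < \<sigma> * res s * (poly (h s) x)\<^sup>2" using sigma_res s hs by auto
      show "\<And>s. s \<in> ps ` {1..k} \<Longrightarrow> 0 \<le> \<sigma> * res s * (poly (h s) x)\<^sup>2"
        using sigma_res by (auto simp: less_imp_le)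
    qed
  qed
  finally show ?thesis .
qed

definition pencil :: "real \<Rightarrow> real poly" where "pencil \<alpha> = p + smult \<alpha> q"

lemma degree_pencil: "degree (pencil \<alpha>) = k"
proof -
  have "degree (smult \<alpha> q) < degree p" using degree_smult_le[of \<alpha> q] deg_p deg_q k2 by linarith
  then show ?thesis unfolding pencil_def using deg_p by (simp add: degree_add_eq_left)
qed

lemma pencil_nonzero: "pencil \<alpha> \<noteq> 0" using degree_pencil[of \<alpha>] k2 by auto

lemma cpx_pencil: "poly (cpx (pencil \<alpha>)) z = poly (cpx p) z + complex_of_real \<alpha> * poly (cpx q) z"
  by (simp add: pencil_def cpx_add cpx_smult)

lemma wronskian_pencil: "wronskian = q * pderiv (pencil \<alpha>) - pencil \<alpha> * pderiv q"
  by (simp add: wronskian_def pencil_def pderiv_add pderiv_smult algebra_simps)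

lemma pencil_root_sign: "poly (pencil \<alpha>) r = 0 \<Longrightarrow> \<sigma> * (poly q r * poly (pderiv (pencil \<alpha>)) r) > 0"
  using wronskian_sign[of r] wronskian_pencil[of \<alpha>] by simp

lemma pencil_root_simple: "poly (pencil \<alpha>) r = 0 \<Longrightarrow> poly (pderiv (pencil \<alpha>)) r \<noteq> 0"
  using pencil_root_sign by fastforce

lemma pencil_weight_sign:
  assumes r: "poly (pencil \<alpha>) s = 0"
  shows "\<sigma> * (poly q s / poly (pderiv (pencil \<alpha>)) s) > 0"
proof -
  have nz: "poly (pderiv (pencil \<alpha>)) s \<noteq> 0" using pencil_root_simple[OF r] .
  have "\<sigma> * (poly q s / poly (pderiv (pencil \<alpha>)) s) =
        \<sigma> * (poly q s * poly (pderiv (pencil \<alpha>)) s) / (poly (pderiv (pencil \<alpha>)) s)^2"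
    using nz by (simp add: power2_eq_square field_simps)
  also have "\<dots> > 0" using pencil_root_sign[OF r] nz by simp
  finally show ?thesis .
qed

lemma pencil_root_between:
  assumes \<alpha>: "\<alpha> \<noteq> 0" and i: "i \<in> {1..k-1}"
  shows "\<exists>x. ps i < x \<and> x < ps (Suc i) \<and> poly (pencil \<alpha>) x = 0"
proof -
  have "poly p (ps i) = 0" "poly p (ps (Suc i)) = 0" using roots_p i by auto
  then have "poly (pencil \<alpha>) (ps i) * poly (pencil \<alpha>) (ps (Suc i)) =
        \<alpha>^2 * (poly q (ps i) * poly q (ps (Suc i)))"
    by (simp add: pencil_def power2_eq_square ac_simps)
  also have "\<dots> < 0" using q_alternates[OF i] \<alpha> by (simp add: mult_pos_neg)
  finally show ?thesis using poly_IVT ps_less[of i "Suc i"] i by fastforce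
qed

text \<open>The pencil has at least \<open>k - 1\<close> real roots: one between any two consecutive roots of \<open>p\<close>
  if \<open>\<alpha> \<noteq> 0\<close>, and the \<open>k\<close> roots of \<open>p\<close> if \<open>\<alpha> = 0\<close>.\<close>
lemma pencil_many_roots: "k \<le> card {x. poly (pencil \<alpha>) x = 0} + 1"
proof (cases "\<alpha> = 0")
  case True
  then have "{x. poly (pencil \<alpha>) x = 0} = ps ` {1..k}" using roots_p by (auto simp: pencil_def)
  then show ?thesis using card_image[OF ps_inj] by simp
next
  case False
  then obtain \<rho> where \<rho>: "\<forall>i\<in>{1..k-1}. ps i < \<rho> i \<and> \<rho> i < ps (Suc i) \<and> poly (pencil \<alpha>) (\<rho> i) = 0"
    using pencil_root_between by metis
  have less: "\<rho> i < \<rho> l" if "i \<in> {1..k-1}" "l \<in> {1..k-1}" "i < l" for i l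
  proof -
    have "\<rho> i < ps (Suc i)" using \<rho> that by auto
    also have "ps (Suc i) \<le> ps l" using ps_le[of "Suc i" l] that by auto
    also have "ps l < \<rho> l" using \<rho> that by auto
    finally show ?thesis .
  qed
  have "inj_on \<rho> {1..k-1}"
    by (rule inj_onI) (metis less linorder_neqE_nat order_less_irrefl)
  then have "k - 1 = card (\<rho> ` {1..k-1})" using card_image by fastforce
  also have "\<dots> \<le> card {x. poly (pencil \<alpha>) x = 0}"
    using \<rho> poly_roots_finite[OF pencil_nonzero] by (intro card_mono) auto
  finally show ?thesis by simp
qed

lemma pencil_splits: "simple_root_set (pencil \<alpha>) {x. poly (pencil \<alpha>) x = 0}"
  using simple_roots_split[OF pencil_nonzero] pencil_many_roots pencil_root_simple degree_pencil
  by simp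

lemma card_pencil_roots: "card {x. poly (pencil \<alpha>) x = 0} = k"
  using pencil_splits degree_pencil by (simp add: simple_root_set_def)

text \<open>At consecutive roots of the pencil the weights \<open>q/p_\<alpha>'\<close> share the sign \<open>\<sigma>\<close> while \<open>p_\<alpha>'\<close>
  alternates; hence \<open>q\<close> alternates.\<close>
lemma q_alternates_pencil:
  assumes ab: "consecutive_roots (pencil \<alpha>) a b"
  shows "poly q a * poly q b < 0"
proof -
  have ra: "poly (pencil \<alpha>) a = 0" and rb: "poly (pencil \<alpha>) b = 0"
    using ab by (auto simp: consecutive_roots_def)
  have dd: "poly (pderiv (pencil \<alpha>)) a * poly (pderiv (pencil \<alpha>)) b < 0"
    using consecutive_roots_pderiv_alternates[OF ab] pencil_root_simple ra rb by blast
  have "(\<sigma> * (poly q a * poly (pderiv (pencil \<alpha>)) a)) * (\<sigma> * (poly q b * poly (pderiv (pencil \<alpha>)) b)) > 0"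
    using pencil_root_sign[OF ra] pencil_root_sign[OF rb] by simp
  then have "\<sigma>^2 * (poly q a * poly q b) * (poly (pderiv (pencil \<alpha>)) a * poly (pderiv (pencil \<alpha>)) b) > 0"
    by (simp add: power2_eq_square ac_simps)
  then have "\<sigma>^2 * (poly q a * poly q b) < 0"
    using dd mult_nonneg_nonpos[of "\<sigma>^2 * (poly q a * poly q b)"
        "poly (pderiv (pencil \<alpha>)) a * poly (pderiv (pencil \<alpha>)) b"] by linarith
  then show ?thesis by (simp add: mult_less_0_iff)
qed

subsection \<open>Univalence on the disk\<close>

text \<open>Since \<open>p_\<alpha>/q = p/q + \<alpha>\<close>, \<open>R = q/p\<close> takes equal values where \<open>q/p_\<alpha>\<close> does.\<close>
lemma ratmap_eq_imp_pencil_ratio_eq: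
  assumes z: "poly (cpx (pencil \<alpha>)) z \<noteq> 0" and w: "poly (cpx (pencil \<alpha>)) w \<noteq> 0"
    and eq: "ratmap q p (Some z) = ratmap q p (Some w)"
  shows "poly (cpx q) z / poly (cpx (pencil \<alpha>)) z = poly (cpx q) w / poly (cpx (pencil \<alpha>)) w"
proof -
  have "poly (cpx q) z * poly (cpx p) w = poly (cpx q) w * poly (cpx p) z"
    using eq by (auto simp: ratmap_def field_simps split: if_splits)
  then have "poly (cpx q) z * poly (cpx (pencil \<alpha>)) w = poly (cpx q) w * poly (cpx (pencil \<alpha>)) z"
    by (simp add: cpx_pencil algebra_simps)
  then show ?thesis using z w by (simp add: field_simps)
qed

lemma univalent_on_diam_disk:
  assumes ab: "consecutive_roots (pencil \<alpha>) a b"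
  shows "inj_on (ratmap q p) (Some ` diam_disk a b)"
proof -
  define S where "S = {x. poly (pencil \<alpha>) x = 0}"
  define d where "d s = poly q s / poly (pderiv (pencil \<alpha>)) s" for s
  have split: "simple_root_set (pencil \<alpha>) S" using pencil_splits by (simp add: S_def)
  have dq: "degree q < degree (pencil \<alpha>)" using degree_pencil deg_q k2 by simp
  have out: "\<forall>s\<in>S. s \<le> a \<or> b \<le> s" using ab by (simp add: S_def consecutive_roots_def)
  text \<open>The pencil has no roots in the disk: its roots are real and lie outside \<open>(a, b)\<close>.\<close>
  have nz: "poly (cpx (pencil \<alpha>)) z \<noteq> 0" if "z \<in> diam_disk a b" for z
  proof
    assume "poly (cpx (pencil \<alpha>)) z = 0"
    then obtain s where "s \<in> S" "z = complex_of_real s"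
      using split_complex_roots_real[OF split] degree_pencil k2 by fastforce
    then show False using that out real_in_diam_disk by force
  qed
  have "z = w" if z: "z \<in> diam_disk a b" and w: "w \<in> diam_disk a b"
    and eq: "ratmap q p (Some z) = ratmap q p (Some w)" for z w
  proof (rule cauchy_transform_inj[of a b S \<sigma> d])
    show "a < b" using ab by (simp add: consecutive_roots_def)
    show "finite S" "S \<noteq> {}" using split ab by (auto simp: simple_root_set_def S_def consecutive_roots_def)
    show "\<forall>s\<in>S. s \<le> a \<or> b \<le> s" by (fact out)
    show "\<forall>s\<in>S. \<sigma> * d s > 0" using pencil_weight_sign by (simp add: S_def d_def)
    show "(\<Sum>s\<in>S. complex_of_real (d s) / (z - complex_of_real s)) =
          (\<Sum>s\<in>S. complex_of_real (d s) / (w - complex_of_real s))"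
      using ratmap_eq_imp_pencil_ratio_eq[OF nz[OF z] nz[OF w] eq]
      unfolding complex_partial_fractions[OF split dq nz[OF z]]
        complex_partial_fractions[OF split dq nz[OF w]] d_def .
  qed (use z w in auto)
  then show ?thesis by (auto intro: inj_onI)
qed

subsection \<open>Maximality\<close>

lemma ratmap_real_eq:
  assumes "poly q y * poly p x = poly q x * poly p y"
  shows "ratmap q p (Some (complex_of_real x)) = ratmap q p (Some (complex_of_real y))"
proof (cases "poly p x = 0")
  case True
  then have "poly p y = 0" using assms no_common_real_root by fastforce
  then show ?thesis using True by (simp add: ratmap_def poly_cpx_of_real)
next
  case False
  then have "poly p y \<noteq> 0" using assms no_common_real_root by fastforce
  then have "poly q x / poly p x = poly q y / poly p y" using False assms by (simp add: field_simps)
  then show ?thesis using False \<open>poly p y \<noteq> 0\<close>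
    by (simp add: ratmap_def poly_cpx_of_real flip: of_real_divide)
qed

text \<open>Every value of \<open>R\<close> at a real non-root \<open>x\<close> of the pencil is taken again in \<open>(a, b)\<close>:
  \<open>q - v p_\<alpha>\<close> with \<open>v = q(x)/p_\<alpha>(x)\<close> equals \<open>q\<close> at \<open>a\<close> and \<open>b\<close>, so it changes sign there.\<close>
lemma ratmap_value_repeats_inside:
  assumes ab: "consecutive_roots (pencil \<alpha>) a b" and x: "poly (pencil \<alpha>) x \<noteq> 0"
  shows "\<exists>y. a < y \<and> y < b \<and>
           ratmap q p (Some (complex_of_real x)) = ratmap q p (Some (complex_of_real y))"
proof -
  define v where "v = poly q x / poly (pencil \<alpha>) x"
  define F where "F = q - smult v (pencil \<alpha>)"
  have "poly F a * poly F b < 0"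
    using q_alternates_pencil[OF ab] ab by (simp add: F_def consecutive_roots_def)
  then obtain y where y: "a < y" "y < b" "poly F y = 0"
    using poly_IVT ab by (metis consecutive_roots_def)
  then have "poly q y = v * poly (pencil \<alpha>) y" by (simp add: F_def)
  then have "poly q y * poly (pencil \<alpha>) x = poly q x * poly (pencil \<alpha>) y"
    using x by (simp add: v_def field_simps)
  then have "poly q y * poly p x = poly q x * poly p y"
    by (simp add: pencil_def algebra_simps)
  then show ?thesis using ratmap_real_eq y by blast
qed

lemma larger_real_disk_not_univalent:
  assumes ab: "consecutive_roots (pencil \<alpha>) a b"
    and rd: "real_disk D" and sub: "Some ` diam_disk a b \<subset> D"
  shows "\<not> inj_on (ratmap q p) D"
proof
  assume inj: "inj_on (ratmap q p) D"
  have "a < b" using ab by (simp add: consecutive_roots_def)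
  then obtain x where x: "poly (pencil \<alpha>) x \<noteq> 0" "x < a \<or> b < x" and xD: "Some (complex_of_real x) \<in> D"
    using real_disk_beyond_diameter[OF _ rd sub poly_roots_finite[OF pencil_nonzero[of \<alpha>]]] by auto
  obtain y where y: "a < y" "y < b"
    and eq: "ratmap q p (Some (complex_of_real x)) = ratmap q p (Some (complex_of_real y))"
    using ratmap_value_repeats_inside[OF ab x(1)] by blast
  have "Some (complex_of_real y) \<in> Some ` diam_disk a b" using y real_in_diam_disk by simp
  then have "Some (complex_of_real y) \<in> D" using sub by blast
  then have "x = y" using inj_onD[OF inj eq xD] by simp
  then show False using x(2) y by simp
qed

lemma diam_disk_max_univalent:
  assumes ab: "consecutive_roots (pencil \<alpha>) a b"
  shows "max_real_univalent (ratmap q p) (Some ` diam_disk a b)"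
proof -
  have "a < b" using ab by (simp add: consecutive_roots_def)
  then show ?thesis unfolding max_real_univalent_def
    using real_disk_diam_disk univalent_on_diam_disk[OF ab] larger_real_disk_not_univalent[OF ab]
    by blast
qed

lemma sorted_pencil_roots_consecutive:
  fixes \<alpha> :: real
  assumes j: "j \<in> {1..k-1}"
  defines "rs \<equiv> sorted_list_of_set {x. poly (pencil \<alpha>) x = 0}"
  shows "consecutive_roots (pencil \<alpha>) (rs ! (j-1)) (rs ! j)"
proof -
  have j': "Suc (j - 1) = j" and "Suc (j - 1) < card {x. poly (pencil \<alpha>) x = 0}"
    using j card_pencil_roots by auto
  from sorted_list_of_set_adjacent[OF poly_roots_finite[OF pencil_nonzero] this(2)]
  show ?thesis unfolding consecutive_roots_def rs_def j' by simp
qed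

end


theorem theorem2:
  fixes p q :: "real poly" and k :: nat and ps qs :: "nat \<Rightarrow> real"
  assumes "k \<ge> 2" and "degree p = k" and "degree q = k - 1"
    and "{z. poly (cpx p) z = 0} = complex_of_real ` ps ` {1..k}"
    and "{z. poly (cpx q) z = 0} = complex_of_real ` qs ` {1..k-1}"
    and "\<forall>i\<in>{1..k}. order (ps i) p = 1"
    and "\<forall>i\<in>{1..k-1}. order (qs i) q = 1"
    and "\<forall>i\<in>{1..k-1}. ps i < qs i \<and> qs i < ps (Suc i)"
  shows "\<forall>\<alpha>::real. \<forall>j\<in>{1..k-1}.
           (let rs = sorted_list_of_set {x::real. poly (p + smult \<alpha> q) x = 0}
            in max_real_univalent (ratmap q p)
                 (Some ` ball (complex_of_real ((rs ! (j-1) + rs ! j) / 2)) ((rs ! j - rs ! (j-1)) / 2)))"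
proof -
  interpret interlacing p q k ps qs
    by (rule interlacing.intro) (use assms in auto)
  have "max_real_univalent (ratmap q p) (Some ` diam_disk (rs ! (j-1)) (rs ! j))"
    if "j \<in> {1..k-1}" and "rs = sorted_list_of_set {x. poly (pencil \<alpha>) x = 0}" for \<alpha> j rs
    using diam_disk_max_univalent sorted_pencil_roots_consecutive that by blast
  then show ?thesis by (simp add: Let_def pencil_def diam_disk_def)
qed

end
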